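(* Let $k\ge1$ and let $m$ be an integer such that $a_{k+1}q_k<m<q_{k+1}$. If $m\ne q_{k+1,a_{k+1}-1}$, and moreover $m\neq (a_{k+1}-1)q_k+2q_{k-1}$ in case $a_k=1$, then $\|m\alpha\|\ge\|q_{k-1}\alpha\|+(a_{k+1}+1)\|q_k\alpha\|$.
   Context: $\alpha\in(0,1)$ irrational, $\alpha=[0;a_1,a_2,\ldots]$ with positive integers $a_i$, $a_1\ge2$; $q_{-1}=0$, $q_0=1$, $q_1=a_1$, $q_k=a_kq_{k-1}+q_{k-2}$ ($k\ge2$). For $j\ge2$ and $1\le\ell<a_j$, $q_{j,\ell}=\ell q_{j-1}+q_{j-2}$ (denominators of semiconvergents). $\|x\|$ is the distance from $x$ to the nearest integer. *)

theory Defs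
  imports Complex_Main
begin

text \<open>Continued fraction expansion via the Gauss map:
  x_0 = x, x_{n+1} = frac (1 / x_n); partial quotient a_n = floor (1 / x_{n-1}) for n >= 1.
  For irrational x in (0,1) this gives x = [0; a_1, a_2, ...].\<close>

fun cf_rem :: "real \<Rightarrow> nat \<Rightarrow> real" where
  "cf_rem x 0 = x"
| "cf_rem x (Suc n) = frac (1 / cf_rem x n)"

definition cf_a :: "real \<Rightarrow> nat \<Rightarrow> nat" where
  "cf_a x n = nat \<lfloor>1 / cf_rem x (n - 1)\<rfloor>"

fun cf_q :: "real \<Rightarrow> nat \<Rightarrow> nat" where
  "cf_q x 0 = 1"
| "cf_q x (Suc 0) = cf_a x 1"
| "cf_q x (Suc (Suc k)) = cf_a x (Suc (Suc k)) * cf_q x (Suc k) + cf_q x k"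

definition cf_qs :: "real \<Rightarrow> nat \<Rightarrow> nat \<Rightarrow> nat" where
  "cf_qs x j l = l * cf_q x (j - 1) + cf_q x (j - 2)"

definition dnint :: "real \<Rightarrow> real" where
  "dnint y = min (frac y) (1 - frac y)"

end

theory Submission
  imports Defs
begin

text \<open>Put s = q_{k+1} - m, so that 0 < s < q_{k-1}, and let \<delta>_n = |q_n \<alpha> - p_n| = x_0 x_1 \<cdots> x_n
  with x_n = cf_rem \<alpha> n. For any integer t, unimodularity of the matrix of two consecutive
  convergents gives integers u, v with s = u q_{k-2} + v q_{k-1} and t = u p_{k-2} + v p_{k-1}, whence
  |s \<alpha> - t| = |u \<delta>_{k-2} - v \<delta>_{k-1}|. The bounds on s force u and v to have opposite signs unless
  v = 0 and u \<ge> 1, so |s \<alpha> - t| \<ge> \<delta>_{k-2} + \<delta>_{k-1}, or \<ge> \<delta>_{k-2} if s = q_{k-2}. Since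
  \<delta>_{k-2} = a_k \<delta>_{k-1} + \<delta>_k, this yields \<parallel>s \<alpha>\<parallel> \<ge> 2 \<delta>_{k-1} + \<delta>_k unless s = q_{k-2} and a_k = 1.
  Finally \<parallel>m \<alpha>\<parallel> \<ge> \<parallel>s \<alpha>\<parallel> - \<delta>_{k+1} and \<delta>_{k-1} = a_{k+1} \<delta>_k + \<delta>_{k+1}.\<close>

lemma dnint_le_dist_int: "dnint y \<le> \<bar>y - of_int N\<bar>"
proof (cases "N \<le> \<lfloor>y\<rfloor>")
  case True
  then have "frac y \<le> y - of_int N"
    by (simp add: frac_def)
  then show ?thesis
    by (simp add: dnint_def)
next
  case False
  then have "1 - frac y \<le> of_int N - y"
    by (simp add: frac_def)
  then show ?thesis
    by (simp add: dnint_def)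
qed

lemma dnint_eq_dist_int:
  obtains N :: int where "dnint y = \<bar>y - of_int N\<bar>"
proof (cases "frac y \<le> 1 - frac y")
  case True
  then show ?thesis
    using that[of "\<lfloor>y\<rfloor>"] by (simp add: dnint_def frac_def)
next
  case False
  then show ?thesis
    using that[of "\<lfloor>y\<rfloor> + 1"] by (simp add: dnint_def frac_def)
qed

lemma dnint_ge_if_dist_int_ge:
  assumes "\<And>N::int. c \<le> \<bar>y - of_int N\<bar>"
  shows "c \<le> dnint y"
  by (metis assms dnint_eq_dist_int)

lemma dnint_triangle: "dnint z \<le> dnint y + dnint (y - z)"
proof -
  obtain M N :: int where "dnint y = \<bar>y - of_int M\<bar>" and "dnint (y - z) = \<bar>y - z - of_int N\<bar>"
    by (metis dnint_eq_dist_int)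
  moreover have "dnint z \<le> \<bar>z - of_int (M - N)\<bar>"
    by (rule dnint_le_dist_int)
  ultimately show ?thesis
    by simp
qed

lemma opposite_signs_if_between:
  fixes u v A B :: int
  assumes "A \<ge> 1" "B \<ge> 1" "0 < u * A + v * B" "u * A + v * B < B"
  shows "u * v < 0 \<or> (u \<ge> 1 \<and> v = 0)"
proof -
  consider "v \<ge> 1" | "v = 0" | "v \<le> -1"
    by linarith
  then show ?thesis
  proof cases
    case 1
    then have "B \<le> v * B"
      using assms(2) by simp
    then have "u * A < 0"
      using assms by linarith
    then have "u < 0"
      using assms(1) by (simp add: mult_less_0_iff)
    then show ?thesis
      using 1 by (simp add: mult_neg_pos)
  next
    case 2
    then show ?thesis
      using assms by (simp add: zero_less_mult_iff)
  next
    case 3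
    then have "v * B < 0"
      using assms(2) by (simp add: mult_neg_pos)
    then have "u * A > 0"
      using assms by linarith
    then have "u > 0"
      using assms(1) by (simp add: zero_less_mult_iff)
    then show ?thesis
      using 3 by (simp add: mult_pos_neg)
  qed
qed

lemma abs_diff_ge_if_opposite_signs:
  fixes u v :: int and d e :: real
  assumes "u * v < 0" "d \<ge> 0" "e \<ge> 0"
  shows "d + e \<le> \<bar>of_int u * d - of_int v * e\<bar>"
proof -
  have "1 \<le> \<bar>of_int u :: real\<bar>" "1 \<le> \<bar>of_int v :: real\<bar>"
    using assms(1) by (auto simp: mult_less_0_iff)
  then have "d \<le> \<bar>of_int u\<bar> * d" "e \<le> \<bar>of_int v\<bar> * e"
    using assms(2,3) mult_right_mono[of 1] by fastforce+
  moreover have "\<bar>of_int u * d - of_int v * e\<bar> = \<bar>\<bar>of_int u\<bar> * d + \<bar>of_int v\<bar> * e\<bar>"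
    using assms(1) by (cases "u > 0") (auto simp: mult_less_0_iff abs_minus_commute)
  moreover have "\<bar>\<bar>of_int u\<bar> * d + \<bar>of_int v\<bar> * e\<bar> = \<bar>of_int u\<bar> * d + \<bar>of_int v\<bar> * e"
    using assms(2,3) by simp
  ultimately show ?thesis
    by linarith
qed

fun cf_p :: "real \<Rightarrow> nat \<Rightarrow> int" where
  "cf_p x 0 = 0"
| "cf_p x (Suc 0) = 1"
| "cf_p x (Suc (Suc k)) = int (cf_a x (Suc (Suc k))) * cf_p x (Suc k) + cf_p x k"

text \<open>The product formula for the error |q_n x - p_n| of the n-th convergent.\<close>

definition cf_delta :: "real \<Rightarrow> nat \<Rightarrow> real" where
  "cf_delta x n = (\<Prod>i\<le>n. cf_rem x i)"

lemma cf_delta_Suc: "cf_delta x (Suc n) = cf_delta x n * cf_rem x (Suc n)"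
  by (simp add: cf_delta_def)

lemma cf_q_rec:
  assumes "2 \<le> k"
  shows "cf_q x k = cf_a x k * cf_q x (k - 1) + cf_q x (k - 2)"
proof -
  obtain n where "k = 2 + n"
    using le_Suc_ex[OF assms] by blast
  then show ?thesis
    by simp
qed

lemma cf_q_cf_p_det:
  "int (cf_q x (Suc n)) * cf_p x n - int (cf_q x n) * cf_p x (Suc n) = (-1) ^ Suc n"
  by (induction n) (simp_all add: algebra_simps)

lemma cf_q_cf_p_combination:
  fixes s t :: int
  obtains u v :: int where "s = u * int (cf_q x n) + v * int (cf_q x (Suc n))"
    and "t = u * cf_p x n + v * cf_p x (Suc n)"
proof -
  define D where "D = int (cf_q x (Suc n)) * cf_p x n - int (cf_q x n) * cf_p x (Suc n)"
  have DD: "D * D = 1"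
    by (simp add: D_def cf_q_cf_p_det flip: power_mult_distrib)
  define u where "u = D * (t * int (cf_q x (Suc n)) - s * cf_p x (Suc n))"
  define v where "v = D * (s * cf_p x n - t * int (cf_q x n))"
  have "u * int (cf_q x n) + v * int (cf_q x (Suc n)) = D * D * s"
    "u * cf_p x n + v * cf_p x (Suc n) = D * D * t"
    unfolding u_def v_def D_def by (simp_all add: algebra_simps)
  with DD show ?thesis
    using that[of u v] by simp
qed

context
  fixes \<alpha> :: real
  assumes irrational: "\<alpha> \<notin> \<rat>" and pos: "0 < \<alpha>" and less_1: "\<alpha> < 1"
begin

lemma cf_rem_irrational_in_unit_interval: "cf_rem \<alpha> n \<notin> \<rat> \<and> 0 < cf_rem \<alpha> n \<and> cf_rem \<alpha> n < 1"
proof (induction n)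
  case 0
  then show ?case
    using irrational pos less_1 by simp
next
  case (Suc n)
  then have "inverse (cf_rem \<alpha> n) \<notin> \<rat>"
    by simp
  then show ?case
    using Ints_subset_Rats frac_lt_1 by (auto simp: inverse_eq_divide)
qed

lemma cf_rem_pos: "0 < cf_rem \<alpha> n"
  using cf_rem_irrational_in_unit_interval by blast

lemma cf_rem_less_1: "cf_rem \<alpha> n < 1"
  using cf_rem_irrational_in_unit_interval by blast

lemma of_nat_cf_a_Suc: "real (cf_a \<alpha> (Suc n)) = 1 / cf_rem \<alpha> n - cf_rem \<alpha> (Suc n)"
  and cf_a_Suc_ge_1: "cf_a \<alpha> (Suc n) \<ge> 1"
proof -
  have "1 < 1 / cf_rem \<alpha> n"
    using cf_rem_pos cf_rem_less_1 by simp
  then have floor_ge_1: "1 \<le> \<lfloor>1 / cf_rem \<alpha> n\<rfloor>"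
    by linarith
  then have int_cf_a: "int (cf_a \<alpha> (Suc n)) = \<lfloor>1 / cf_rem \<alpha> n\<rfloor>"
    using cf_rem_pos[of n] by (simp add: cf_a_def)
  then have "real (cf_a \<alpha> (Suc n)) = of_int \<lfloor>1 / cf_rem \<alpha> n\<rfloor>"
    by (metis of_int_of_nat_eq)
  then show "real (cf_a \<alpha> (Suc n)) = 1 / cf_rem \<alpha> n - cf_rem \<alpha> (Suc n)"
    by (simp add: frac_def)
  show "cf_a \<alpha> (Suc n) \<ge> 1"
    using floor_ge_1 int_cf_a by linarith
qed

lemma cf_delta_pos: "0 < cf_delta \<alpha> n"
  by (simp add: cf_delta_def cf_rem_pos prod_pos)

lemma cf_delta_Suc_less: "cf_delta \<alpha> (Suc n) < cf_delta \<alpha> n"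
  using cf_delta_pos[of n] cf_rem_less_1[of "Suc n"] by (simp add: cf_delta_Suc)

lemma cf_delta_rec: "cf_delta \<alpha> n = real (cf_a \<alpha> (n + 2)) * cf_delta \<alpha> (n + 1) + cf_delta \<alpha> (n + 2)"
proof -
  have "cf_rem \<alpha> (Suc n) * (real (cf_a \<alpha> (n + 2)) + cf_rem \<alpha> (Suc (Suc n))) = 1"
    using of_nat_cf_a_Suc[of "Suc n"] cf_rem_pos[of "Suc n"] by simp
  then have "cf_delta \<alpha> n = cf_delta \<alpha> n * (cf_rem \<alpha> (Suc n) * (real (cf_a \<alpha> (n + 2)) + cf_rem \<alpha> (Suc (Suc n))))"
    by simp
  then show ?thesis
    by (simp add: cf_delta_Suc algebra_simps)
qed

lemma cf_q_mult_minus_cf_p: "real (cf_q \<alpha> n) * \<alpha> - of_int (cf_p \<alpha> n) = (-1) ^ n * cf_delta \<alpha> n"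
proof (induction n rule: induct_nat_012)
  case 0
  then show ?case
    by (simp add: cf_delta_def)
next
  case 1
  then show ?case
    using of_nat_cf_a_Suc[of 0] pos by (simp add: cf_delta_def field_simps)
next
  case (ge2 n)
  have "real (cf_q \<alpha> (Suc (Suc n))) * \<alpha> - of_int (cf_p \<alpha> (Suc (Suc n)))
      = real (cf_a \<alpha> (n + 2)) * (real (cf_q \<alpha> (Suc n)) * \<alpha> - of_int (cf_p \<alpha> (Suc n)))
        + (real (cf_q \<alpha> n) * \<alpha> - of_int (cf_p \<alpha> n))"
    by (simp add: algebra_simps)
  also have "\<dots> = (-1) ^ n * (cf_delta \<alpha> n - real (cf_a \<alpha> (n + 2)) * cf_delta \<alpha> (n + 1))"
    by (simp only: ge2.IH) (simp add: algebra_simps)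
  also have "\<dots> = (-1) ^ Suc (Suc n) * cf_delta \<alpha> (Suc (Suc n))"
    using cf_delta_rec[of n] by simp
  finally show ?case .
qed

lemma cf_q_pos: "cf_q \<alpha> n \<ge> 1"
  by (induction n rule: induct_nat_012) (simp_all add: cf_a_Suc_ge_1[of 0, simplified] add_increasing)

lemma dnint_cf_q_le: "dnint (real (cf_q \<alpha> n) * \<alpha>) \<le> cf_delta \<alpha> n"
  using dnint_le_dist_int[of "real (cf_q \<alpha> n) * \<alpha>" "cf_p \<alpha> n"] cf_delta_pos[of n]
  by (simp add: cf_q_mult_minus_cf_p abs_mult)

lemma cf_best_approximation:
  fixes s t :: int
  assumes "0 < s" "s < int (cf_q \<alpha> (Suc j))"
  shows "cf_delta \<alpha> j \<le> \<bar>of_int s * \<alpha> - of_int t\<bar>"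
    and "s \<noteq> int (cf_q \<alpha> j) \<Longrightarrow> cf_delta \<alpha> j + cf_delta \<alpha> (Suc j) \<le> \<bar>of_int s * \<alpha> - of_int t\<bar>"
proof -
  obtain u v where s: "s = u * int (cf_q \<alpha> j) + v * int (cf_q \<alpha> (Suc j))"
    and t: "t = u * cf_p \<alpha> j + v * cf_p \<alpha> (Suc j)"
    by (rule cf_q_cf_p_combination)
  have "of_int s * \<alpha> - of_int t
      = of_int u * (real (cf_q \<alpha> j) * \<alpha> - of_int (cf_p \<alpha> j))
        + of_int v * (real (cf_q \<alpha> (Suc j)) * \<alpha> - of_int (cf_p \<alpha> (Suc j)))"
    by (simp add: s t algebra_simps)
  also have "\<dots> = (-1) ^ j * (of_int u * cf_delta \<alpha> j - of_int v * cf_delta \<alpha> (Suc j))"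
    by (simp only: cf_q_mult_minus_cf_p) (simp add: algebra_simps)
  finally have dist: "\<bar>of_int s * \<alpha> - of_int t\<bar> = \<bar>of_int u * cf_delta \<alpha> j - of_int v * cf_delta \<alpha> (Suc j)\<bar>"
    by (simp add: abs_mult)
  have "u * v < 0 \<or> (u \<ge> 1 \<and> v = 0)"
    using assms cf_q_pos[of j] cf_q_pos[of "Suc j"]
    by (intro opposite_signs_if_between) (simp_all add: s)
  then consider (opposite) "u * v < 0" | (once) "u = 1" "v = 0" | (multiple) "u \<ge> 2" "v = 0"
    by linarith
  then have lower: "cf_delta \<alpha> j + (if u = 1 \<and> v = 0 then 0 else cf_delta \<alpha> (Suc j)) \<le> \<bar>of_int s * \<alpha> - of_int t\<bar>"
  proof cases
    case opposite
    then have "v \<noteq> 0"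
      by auto
    then show ?thesis
      using abs_diff_ge_if_opposite_signs[OF opposite, of "cf_delta \<alpha> j" "cf_delta \<alpha> (Suc j)"]
        cf_delta_pos[of j] cf_delta_pos[of "Suc j"] by (simp add: dist)
  next
    case once
    then show ?thesis
      by (simp add: dist)
  next
    case multiple
    then have "2 * cf_delta \<alpha> j \<le> of_int u * cf_delta \<alpha> j"
      using cf_delta_pos[of j] by (intro mult_right_mono) simp_all
    moreover have "\<bar>of_int s * \<alpha> - of_int t\<bar> = of_int u * cf_delta \<alpha> j"
      using multiple cf_delta_pos[of j] by (simp add: dist)
    moreover have "(if u = 1 \<and> v = 0 then 0 else cf_delta \<alpha> (Suc j)) = cf_delta \<alpha> (Suc j)"
      using multiple by simp
    ultimately show ?thesis
      using cf_delta_Suc_less[of j] by linarith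
  qed
  have "0 \<le> (if u = 1 \<and> v = 0 then 0 else cf_delta \<alpha> (Suc j))"
    using cf_delta_pos[of "Suc j"] by simp
  with lower show "cf_delta \<alpha> j \<le> \<bar>of_int s * \<alpha> - of_int t\<bar>"
    by linarith
  show "cf_delta \<alpha> j + cf_delta \<alpha> (Suc j) \<le> \<bar>of_int s * \<alpha> - of_int t\<bar>" if "s \<noteq> int (cf_q \<alpha> j)"
  proof -
    have "\<not> (u = 1 \<and> v = 0)"
      using that by (auto simp: s)
    with lower show ?thesis
      by simp
  qed
qed

lemma dnint_ge_below_cf_q:
  fixes s :: int
  assumes "0 < s" "s < int (cf_q \<alpha> (Suc j))"
    and exception: "cf_a \<alpha> (j + 2) = 1 \<Longrightarrow> s \<noteq> int (cf_q \<alpha> j)"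
  shows "2 * cf_delta \<alpha> (j + 1) + cf_delta \<alpha> (j + 2) \<le> dnint (of_int s * \<alpha>)"
proof (rule dnint_ge_if_dist_int_ge)
  fix t :: int
  have rec: "cf_delta \<alpha> j = real (cf_a \<alpha> (j + 2)) * cf_delta \<alpha> (j + 1) + cf_delta \<alpha> (j + 2)"
    by (rule cf_delta_rec)
  show "2 * cf_delta \<alpha> (j + 1) + cf_delta \<alpha> (j + 2) \<le> \<bar>of_int s * \<alpha> - of_int t\<bar>"
  proof (cases "s = int (cf_q \<alpha> j)")
    case True
    then have "cf_a \<alpha> (j + 2) \<noteq> 1"
      using exception by blast
    moreover have "cf_a \<alpha> (j + 2) \<ge> 1"
      using cf_a_Suc_ge_1[of "Suc j"] by simp
    ultimately have "2 \<le> real (cf_a \<alpha> (j + 2))"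
      by simp
    then have "2 * cf_delta \<alpha> (j + 1) \<le> real (cf_a \<alpha> (j + 2)) * cf_delta \<alpha> (j + 1)"
      using cf_delta_pos by (intro mult_right_mono) (simp_all add: less_imp_le)
    then show ?thesis
      using cf_best_approximation(1)[OF assms(1,2), of t] rec by linarith
  next
    case False
    have "1 \<le> real (cf_a \<alpha> (j + 2))"
      using cf_a_Suc_ge_1[of "Suc j"] by simp
    then have "cf_delta \<alpha> (j + 1) \<le> real (cf_a \<alpha> (j + 2)) * cf_delta \<alpha> (j + 1)"
      using mult_right_mono[of 1 _ "cf_delta \<alpha> (j + 1)"] cf_delta_pos by (simp add: less_imp_le)
    then show ?thesis
      using cf_best_approximation(2)[OF assms(1,2) False, of t, unfolded Suc_eq_plus1] rec by linarith
  qed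
qed

lemma cf_q_Suc_if_cf_a_eq_1:
  assumes "2 \<le> k" "cf_a \<alpha> k = 1"
  shows "cf_q \<alpha> (k + 1) = (cf_a \<alpha> (k + 1) - 1) * cf_q \<alpha> k + 2 * cf_q \<alpha> (k - 1) + cf_q \<alpha> (k - 2)"
proof -
  obtain b where b: "cf_a \<alpha> (k + 1) = Suc b"
    using cf_a_Suc_ge_1[of k] not0_implies_Suc by fastforce
  show ?thesis
    using cf_q_rec[of "k + 1" \<alpha>] cf_q_rec[OF assms(1), of \<alpha>] assms b by simp
qed

lemma dnint_ge_between_cf_q:
  fixes m :: int
  assumes lo: "int (cf_a \<alpha> (j + 3) * cf_q \<alpha> (j + 2)) < m" and hi: "m < int (cf_q \<alpha> (j + 3))"
    and exception: "cf_a \<alpha> (j + 2) = 1 \<Longrightarrow> m \<noteq> int (cf_q \<alpha> (j + 3)) - int (cf_q \<alpha> j)"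
  shows "cf_delta \<alpha> (j + 1) + (real (cf_a \<alpha> (j + 3)) + 1) * cf_delta \<alpha> (j + 2) \<le> dnint (of_int m * \<alpha>)"
proof -
  define s where "s = int (cf_q \<alpha> (j + 3)) - m"
  have "cf_q \<alpha> (j + 3) = cf_a \<alpha> (j + 3) * cf_q \<alpha> (j + 2) + cf_q \<alpha> (Suc j)"
    using cf_q_rec[of "j + 3" \<alpha>] by simp
  then have "0 < s" "s < int (cf_q \<alpha> (Suc j))"
    using lo hi by (simp_all add: s_def)
  moreover have "cf_a \<alpha> (j + 2) = 1 \<Longrightarrow> s \<noteq> int (cf_q \<alpha> j)"
    using exception by (auto simp: s_def)
  ultimately have "2 * cf_delta \<alpha> (j + 1) + cf_delta \<alpha> (j + 2) \<le> dnint (of_int s * \<alpha>)"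
    by (rule dnint_ge_below_cf_q)
  moreover have "dnint (of_int s * \<alpha>) \<le> dnint (real (cf_q \<alpha> (j + 3)) * \<alpha>) + dnint (of_int m * \<alpha>)"
    using dnint_triangle[of "of_int s * \<alpha>" "real (cf_q \<alpha> (j + 3)) * \<alpha>"] by (simp add: s_def algebra_simps)
  moreover have "dnint (real (cf_q \<alpha> (j + 3)) * \<alpha>) \<le> cf_delta \<alpha> (j + 3)"
    by (rule dnint_cf_q_le)
  moreover have "cf_delta \<alpha> (j + 1) = real (cf_a \<alpha> (j + 3)) * cf_delta \<alpha> (j + 2) + cf_delta \<alpha> (j + 3)"
    using cf_delta_rec[of "j + 1"] by (simp add: numeral_3_eq_3)
  ultimately show ?thesis
    unfolding distrib_right mult_1 by linarith
qed

end

theorem lemma3p3: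
  fixes \<alpha> :: real and k :: nat and m :: int
  assumes irr: "\<alpha> \<notin> \<rat>" and pos: "0 < \<alpha>" and lt1: "\<alpha> < 1"
    and a1: "cf_a \<alpha> 1 \<ge> 2"
    and k: "k \<ge> 1"
    and lo: "int (cf_a \<alpha> (k + 1) * cf_q \<alpha> k) < m"
    and hi: "m < int (cf_q \<alpha> (k + 1))"
    and ne1: "m \<noteq> int (cf_qs \<alpha> (k + 1) (cf_a \<alpha> (k + 1) - 1))"
    and ne2: "cf_a \<alpha> k = 1 \<longrightarrow>
               m \<noteq> int ((cf_a \<alpha> (k + 1) - 1) * cf_q \<alpha> k + 2 * cf_q \<alpha> (k - 1))"
  shows "dnint (of_int m * \<alpha>) \<ge>
           dnint (real (cf_q \<alpha> (k - 1)) * \<alpha>)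
           + (real (cf_a \<alpha> (k + 1)) + 1) * dnint (real (cf_q \<alpha> k) * \<alpha>)"
proof -
  have "k \<noteq> 1"
    \<comment> \<open>q_2 = a_2 q_1 + 1 leaves no room for m\<close>
    using lo hi cf_q_rec[of 2 \<alpha>] by auto
  with k have "2 \<le> k"
    by simp
  have exception: "m \<noteq> int (cf_q \<alpha> (k + 1)) - int (cf_q \<alpha> (k - 2))" if "cf_a \<alpha> k = 1"
    using ne2 that cf_q_Suc_if_cf_a_eq_1[OF irr pos lt1 \<open>2 \<le> k\<close> that] by simp
  have "k - 2 + 3 = k + 1" "k - 2 + 2 = k" "k - 2 + 1 = k - 1"
    using \<open>2 \<le> k\<close> by simp_all
  then have "cf_delta \<alpha> (k - 1) + (real (cf_a \<alpha> (k + 1)) + 1) * cf_delta \<alpha> k \<le> dnint (of_int m * \<alpha>)"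
    using dnint_ge_between_cf_q[OF irr pos lt1, of "k - 2" m] lo hi exception by simp
  moreover have "(real (cf_a \<alpha> (k + 1)) + 1) * dnint (real (cf_q \<alpha> k) * \<alpha>)
      \<le> (real (cf_a \<alpha> (k + 1)) + 1) * cf_delta \<alpha> k"
    using dnint_cf_q_le[OF irr pos lt1, of k] by (simp add: mult_left_mono)
  ultimately show ?thesis
    using dnint_cf_q_le[OF irr pos lt1, of "k - 1"] by linarith
qed

end
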